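(* For $i\in\{1,2\}$ let $\mathcal{P}_i=\mathrm{con}(\mathcal{C}_i)=\mathrm{gen}(\mathcal{G}_i)\subseteq\mathbb{R}^n$ be non-empty NNC polyhedra, with $\mathcal{C}_i$ finite constraint systems and $\mathcal{G}_i=(R_i,P_i,C_i)$ extended generator systems. Then $\mathcal{P}_1\uplus\mathcal{P}_2\neq\mathcal{P}_1\cup\mathcal{P}_2$ if and only if, for some $i,j\in\{1,2\}$ with $i\neq j$, there exists a generator $g_i$ of $\mathcal{G}_i$ that saturates a constraint $\beta_i\in\mathcal{C}_i$ violated by $\mathcal{P}_j$, and at least one of the following holds: (1) $g_i$ is a ray or a closure point of $\mathcal{G}_i$ (i.e., $g_i\in R_i$ or $g_i\in C_i$) that is not subsumed by $\mathcal{P}_j$; (2) $g_i$ is a point of $\mathcal{G}_i$ (i.e., $g_i\in P_i$), $\beta_i$ is non-strict, and $g_i\notin\mathbb{C}(\mathcal{P}_j)$; (3) $\beta_i$ is strict and is saturated by some point $\mathbf{p}\in(\mathcal{P}_1\uplus\mathcal{P}_2)\setminus\mathcal{P}_j$.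
   Context: A constraint is either a non-strict inequality $\langle\mathbf{a},\mathbf{x}\rangle\le b$ or a strict inequality $\langle\mathbf{a},\mathbf{x}\rangle<b$, with $\mathbf{a}\in\mathbb{R}^n\setminus\{\mathbf{0}\}$, $b\in\mathbb{R}$ (equalities being treated as pairs of non-strict inequalities). For a finite set $\mathcal{C}$ of constraints, $\mathrm{con}(\mathcal{C})$ is the set of points of $\mathbb{R}^n$ satisfying all of them; such sets are the NNC (not necessarily closed) polyhedra. An extended generator system is a triple $(R,P,C)$ of finite subsets of $\mathbb{R}^n$, $R=\{\mathbf{r}_k\}$, $P=\{\mathbf{p}_k\}$, $C=\{\mathbf{c}_k\}$, with $\mathbf{0}\notin R$, and $\mathrm{gen}((R,P,C))=\{\sum\rho_k\mathbf{r}_k+\sum\sigma_k\mathbf{p}_k+\sum\tau_k\mathbf{c}_k : \rho_k,\sigma_k,\tau_k\ge0,\ (\sigma_k)_k\neq\mathbf{0},\ \sum\sigma_k+\sum\tau_k=1\}$; elements of $R$, $P$, $C$ are called rays, points and closure points of the system, respectively. $\mathbb{C}(S)$ denotes the topological closure of $S$. For a non-empty NNC polyhedron $\mathcal{P}$, a vector $\mathbf{r}\neq\mathbf{0}$ is a ray of $\mathcal{P}$ if $\mathbf{p}+\rho\mathbf{r}\in\mathcal{P}$ for all $\mathbf{p}\in\mathcal{P}$, $\rho\ge0$; a vector $\mathbf{c}$ is a closure point of $\mathcal{P}$ if $\mathbf{c}\in\mathbb{C}(\mathcal{P})$. A polyhedron $\mathcal{P}$ subsumes a point (resp. ray, closure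 point) $\mathbf{v}$ if $\mathbf{v}$ is a point in $\mathcal{P}$ (resp. a ray of $\mathcal{P}$, a closure point of $\mathcal{P}$). A point or closure point $\mathbf{p}$ saturates a constraint $\langle\mathbf{a},\mathbf{x}\rangle\bowtie b$ ($\bowtie\in\{<,\le\}$) if $\langle\mathbf{a},\mathbf{p}\rangle=b$; a ray $\mathbf{r}$ saturates it if $\langle\mathbf{a},\mathbf{r}\rangle=0$. A polyhedron violates a constraint if some point of it does not satisfy it. $\mathcal{P}_1\uplus\mathcal{P}_2$ is the smallest NNC polyhedron containing $\mathcal{P}_1\cup\mathcal{P}_2$; if $\mathcal{P}_i=\mathrm{gen}((R_i,P_i,C_i))$ then $\mathcal{P}_1\uplus\mathcal{P}_2=\mathrm{gen}((R_1\cup R_2,P_1\cup P_2,C_1\cup C_2))$. *)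

theory Defs
  imports "HOL-Analysis.Analysis"
begin

datatype 'v constr = NonStrict 'v real | Strict 'v real

fun constr_normal :: "'v constr \<Rightarrow> 'v" where
  "constr_normal (NonStrict a b) = a"
| "constr_normal (Strict a b) = a"

fun constr_rhs :: "'v constr \<Rightarrow> real" where
  "constr_rhs (NonStrict a b) = b"
| "constr_rhs (Strict a b) = b"

fun is_strict :: "'v constr \<Rightarrow> bool" where
  "is_strict (NonStrict a b) = False"
| "is_strict (Strict a b) = True"

fun satisfies :: "('a::real_inner) \<Rightarrow> 'a constr \<Rightarrow> bool" where
  "satisfies x (NonStrict a b) = (inner a x \<le> b)"
| "satisfies x (Strict a b) = (inner a x < b)"

definition constr_system :: "('a::real_inner) constr set \<Rightarrow> bool" where
  "constr_system Cs \<longleftrightarrow> finite Cs \<and> (\<forall>c\<in>Cs. constr_normal c \<noteq> 0)"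

definition con :: "('a::real_inner) constr set \<Rightarrow> 'a set" where
  "con Cs = {x. \<forall>c\<in>Cs. satisfies x c}"

definition NNC_polyhedron :: "('a::real_inner) set \<Rightarrow> bool" where
  "NNC_polyhedron Q \<longleftrightarrow> (\<exists>Cs. constr_system Cs \<and> Q = con Cs)"

definition gen_system :: "('a::real_vector) set \<Rightarrow> 'a set \<Rightarrow> 'a set \<Rightarrow> bool" where
  "gen_system R P C \<longleftrightarrow> finite R \<and> finite P \<and> finite C \<and> 0 \<notin> R"

definition gen :: "('a::real_vector) set \<Rightarrow> 'a set \<Rightarrow> 'a set \<Rightarrow> 'a set" where
  "gen R P C = {x. \<exists>\<rho> \<sigma> \<tau>.
      (\<forall>r\<in>R. \<rho> r \<ge> 0) \<and> (\<forall>p\<in>P. \<sigma> p \<ge> 0) \<and> (\<forall>c\<in>C. \<tau> c \<ge> 0) \<and>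
      (\<exists>p\<in>P. \<sigma> p \<noteq> 0) \<and> sum \<sigma> P + sum \<tau> C = 1 \<and>
      x = (\<Sum>r\<in>R. \<rho> r *\<^sub>R r) + (\<Sum>p\<in>P. \<sigma> p *\<^sub>R p) + (\<Sum>c\<in>C. \<tau> c *\<^sub>R c)}"

definition poly_hull :: "('a::real_inner) set \<Rightarrow> 'a set" where
  "poly_hull S = \<Inter>{Q. NNC_polyhedron Q \<and> S \<subseteq> Q}"

definition violates :: "('a::real_inner) set \<Rightarrow> 'a constr \<Rightarrow> bool" where
  "violates Q c \<longleftrightarrow> (\<exists>x\<in>Q. \<not> satisfies x c)"

definition ray_of :: "('a::real_vector) set \<Rightarrow> 'a \<Rightarrow> bool" where
  "ray_of Q r \<longleftrightarrow> r \<noteq> 0 \<and> (\<forall>p\<in>Q. \<forall>\<rho>::real. \<rho> \<ge> 0 \<longrightarrow> p + \<rho> *\<^sub>R r \<in> Q)"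

datatype gkind = Ray | Pt | ClosurePt

fun in_gen :: "'a set \<Rightarrow> 'a set \<Rightarrow> 'a set \<Rightarrow> gkind \<Rightarrow> 'a \<Rightarrow> bool" where
  "in_gen R P C Ray g = (g \<in> R)"
| "in_gen R P C Pt g = (g \<in> P)"
| "in_gen R P C ClosurePt g = (g \<in> C)"

fun saturates :: "gkind \<Rightarrow> ('a::real_inner) \<Rightarrow> 'a constr \<Rightarrow> bool" where
  "saturates Ray g c = (inner (constr_normal c) g = 0)"
| "saturates Pt g c = (inner (constr_normal c) g = constr_rhs c)"
| "saturates ClosurePt g c = (inner (constr_normal c) g = constr_rhs c)"

fun subsumes :: "('a::real_normed_vector) set \<Rightarrow> gkind \<Rightarrow> 'a \<Rightarrow> bool" where
  "subsumes Q Ray g = ray_of Q g"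
| "subsumes Q Pt g = (g \<in> Q)"
| "subsumes Q ClosurePt g = (g \<in> closure Q)"

text \<open>The condition of Theorem 4 for an ordered pair (i,j): generator system (R,P,C) and
  constraint system Cs of P_i, polyhedron Qj = P_j, H = P_1 poly-hull P_2.\<close>
definition thm4_cond ::
  "('a::real_inner) set \<Rightarrow> 'a set \<Rightarrow> 'a set \<Rightarrow> 'a constr set \<Rightarrow> 'a set \<Rightarrow> 'a set \<Rightarrow> bool" where
  "thm4_cond R P C Cs Qj H \<longleftrightarrow>
     (\<exists>k g \<beta>. in_gen R P C k g \<and> \<beta> \<in> Cs \<and> saturates k g \<beta> \<and> violates Qj \<beta> \<and>
        ((k \<in> {Ray, ClosurePt} \<and> \<not> subsumes Qj k g)
         \<or> (k = Pt \<and> \<not> is_strict \<beta> \<and> g \<notin> closure Qj)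
         \<or> (is_strict \<beta> \<and> (\<exists>p\<in>H - Qj. saturates Pt p \<beta>))))"

end

theory Submission
  imports Defs
begin

text \<open>Let \<open>x\<close> lie in the poly-hull \<open>H\<close> of \<open>Q1 \<union> Q2\<close> but in neither polyhedron.
  If \<open>x\<close> is in the closure of \<open>Qi\<close>, it saturates a strict constraint of \<open>Qi\<close> that it
  violates; the face of the closure of \<open>Qi\<close> on that constraint contains a point or closure
  point of \<open>Qi\<close>, and \<open>x\<close> itself witnesses condition (3).
  Otherwise some constraint of \<open>Qi\<close> is violated even in relaxed form by \<open>x\<close>, and, as \<open>x \<in> H\<close>,
  also by some \<open>q \<in> Qj\<close>. The segment from \<open>x\<close> to \<open>q\<close> stays in \<open>H\<close> and outside the closure
  of \<open>Qi\<close>, and enters the closure of \<open>Qj\<close> at a point \<open>m\<close> saturating a constraint \<open>\<beta>\<close> of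
  \<open>Qj\<close> that \<open>Qi\<close> violates. If \<open>m \<notin> Qj\<close>, the first case applies to \<open>m\<close> with the roles
  exchanged. If \<open>m \<in> Qj\<close>, \<open>\<beta>\<close> is non-strict and \<open>m\<close> is generated by the generators of \<open>Qj\<close>
  saturating \<open>\<beta>\<close>; since \<open>m\<close> escapes the closure of \<open>Qi\<close>, one of them gives (1) or (2).
  Conversely, each condition yields an explicit point of \<open>H\<close> outside \<open>Q1 \<union> Q2\<close>: one close
  to a generator outside the closure of \<open>Qj\<close> on the segment towards a point of \<open>Qj\<close>
  violating \<open>\<beta>\<close>, or one far along a ray of \<open>Qi\<close> that is not a ray of \<open>Qj\<close>.\<close>

lemma satisfies_iff:
  "satisfies x c \<longleftrightarrow> (if is_strict c then inner (constr_normal c) x < constr_rhs c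
                      else inner (constr_normal c) x \<le> constr_rhs c)"
  by (cases c) auto

lemma satisfies_imp_inner_le: "satisfies x c \<Longrightarrow> inner (constr_normal c) x \<le> constr_rhs c"
  by (cases c) auto

lemma satisfies_mono:
  "inner (constr_normal c) y \<le> inner (constr_normal c) x \<Longrightarrow> satisfies x c \<Longrightarrow> satisfies y c"
  by (cases c) auto

lemma satisfies_add_nonpos_direction:
  assumes "inner (constr_normal c) r \<le> 0" "0 \<le> l" "satisfies p c"
  shows "satisfies (p + l *\<^sub>R r) c"
  using assms by (intro satisfies_mono[OF _ assms(3)]) (simp add: inner_add_right mult_nonneg_nonpos)

lemma convex_satisfies: "convex {x. satisfies x c}"
  by (cases c) (simp_all add: convex_halfspace_le convex_halfspace_lt)

lemma convex_con: "convex (con Cs)"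
proof -
  have "con Cs = (\<Inter>c\<in>Cs. {x. satisfies x c})"
    by (auto simp: con_def)
  then show ?thesis
    by (simp add: convex_INT convex_satisfies)
qed

lemma convex_NNC_polyhedron: "NNC_polyhedron Q \<Longrightarrow> convex Q"
  unfolding NNC_polyhedron_def using convex_con by auto

lemma inner_convex_comb:
  "inner a ((1 - t) *\<^sub>R x + t *\<^sub>R y) = (1 - t) * inner a x + t * inner a (y::'a::real_inner)"
  by (simp add: inner_add_right)

lemma satisfies_convex_comb_relaxed:
  assumes "inner (constr_normal c) g \<le> constr_rhs c" "satisfies q c" "0 < t" "t \<le> 1"
  shows "satisfies ((1 - t) *\<^sub>R g + t *\<^sub>R q) c"
proof -
  let ?a = "constr_normal c" and ?b = "constr_rhs c"
  have g: "(1 - t) * inner ?a g \<le> (1 - t) * ?b"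
    using assms by (intro mult_left_mono) auto
  show ?thesis
  proof (cases "is_strict c")
    case True
    then have "t * inner ?a q < t * ?b"
      using assms by (simp add: satisfies_iff)
    then show ?thesis
      using g True by (simp add: satisfies_iff inner_convex_comb algebra_simps)
  next
    case False
    then have "t * inner ?a q \<le> t * ?b"
      using assms by (intro mult_left_mono) (auto simp: satisfies_iff)
    then show ?thesis
      using g False by (simp add: satisfies_iff inner_convex_comb algebra_simps)
  qed
qed

lemma in_closure_if_open_segment_subset:
  fixes a b :: "'a::real_normed_vector"
  assumes "\<And>u. 0 < u \<Longrightarrow> u < 1 \<Longrightarrow> (1 - u) *\<^sub>R a + u *\<^sub>R b \<in> S"
  shows "a \<in> closure S"
proof -
  let ?f = "\<lambda>u::real. (1 - u) *\<^sub>R a + u *\<^sub>R b"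
  have "?f ` {0<..<1} \<subseteq> closure S"
    using assms closure_subset by fastforce
  then have "?f ` closure {0<..<1} \<subseteq> closure S"
    by (intro image_closure_subset) (auto intro!: continuous_intros)
  then show ?thesis
    by force
qed

lemma in_closure_con_if_relaxed:
  assumes "p \<in> con Cs" and "\<And>c. c \<in> Cs \<Longrightarrow> inner (constr_normal c) x \<le> constr_rhs c"
  shows "x \<in> closure (con Cs)"
proof (rule in_closure_if_open_segment_subset)
  fix u :: real assume "0 < u" "u < 1"
  then show "(1 - u) *\<^sub>R x + u *\<^sub>R p \<in> con Cs"
    using assms satisfies_convex_comb_relaxed[of _ x p u] by (auto simp: con_def)
qed

lemma inner_le_on_closure:
  assumes "\<And>y. y \<in> Q \<Longrightarrow> inner a y \<le> b" "x \<in> closure Q"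
  shows "inner a x \<le> b"
proof -
  have "closure Q \<subseteq> {y. inner a y \<le> b}"
    using assms(1) by (intro closure_minimal) (auto intro: closed_halfspace_le)
  then show ?thesis
    using assms(2) by auto
qed

lemma ray_of_conI:
  assumes "r \<noteq> 0" "\<And>c. c \<in> Cs \<Longrightarrow> inner (constr_normal c) r \<le> 0"
  shows "ray_of (con Cs) r"
  unfolding ray_of_def con_def
  using assms by (blast intro: satisfies_add_nonpos_direction)

lemma ray_of_closure:
  fixes Q :: "'a::real_normed_vector set"
  assumes "ray_of Q r"
  shows "ray_of (closure Q) r"
  unfolding ray_of_def
proof (intro conjI ballI allI impI)
  show "r \<noteq> 0"
    using assms by (simp add: ray_of_def)
  fix p and l :: real assume "p \<in> closure Q" "0 \<le> l"
  have "(+) (l *\<^sub>R r) ` Q \<subseteq> Q"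
    using assms \<open>0 \<le> l\<close> by (auto simp: ray_of_def add.commute)
  then have "(+) (l *\<^sub>R r) ` closure Q \<subseteq> closure Q"
    by (metis closure_mono closure_translation)
  then show "p + l *\<^sub>R r \<in> closure Q"
    using \<open>p \<in> closure Q\<close> by (auto simp: add.commute)
qed

lemma ray_of_inner_nonpos:
  assumes "ray_of Q r" "p \<in> Q" "\<And>y. y \<in> Q \<Longrightarrow> inner a y \<le> b"
  shows "inner a r \<le> 0"
proof (rule ccontr)
  assume "\<not> inner a r \<le> 0"
  define l where "l = (\<bar>b - inner a p\<bar> + 1) / inner a r"
  have "0 \<le> l" and "l * inner a r = \<bar>b - inner a p\<bar> + 1"
    using \<open>\<not> inner a r \<le> 0\<close> by (auto simp: l_def)
  moreover have "inner a (p + l *\<^sub>R r) \<le> b"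
    using assms \<open>0 \<le> l\<close> by (auto simp: ray_of_def)
  ultimately show False
    by (simp add: inner_add_right)
qed

lemma subset_poly_hull: "S \<subseteq> poly_hull S"
  unfolding poly_hull_def by auto

lemma poly_hull_subset_con: "constr_system Cs \<Longrightarrow> S \<subseteq> con Cs \<Longrightarrow> poly_hull S \<subseteq> con Cs"
  unfolding poly_hull_def NNC_polyhedron_def by auto

lemma mem_poly_hullI:
  assumes "\<And>Cs. constr_system Cs \<Longrightarrow> S \<subseteq> con Cs \<Longrightarrow> x \<in> con Cs"
  shows "x \<in> poly_hull S"
  unfolding poly_hull_def NNC_polyhedron_def using assms by blast

lemma convex_poly_hull: "convex (poly_hull S)"
  unfolding poly_hull_def by (rule convex_Inter) (auto intro: convex_NNC_polyhedron)

lemma poly_hull_satisfies: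
  assumes "constr_normal c \<noteq> 0" "\<And>y. y \<in> S \<Longrightarrow> satisfies y c" "x \<in> poly_hull S"
  shows "satisfies x c"
proof -
  have "poly_hull S \<subseteq> con {c}"
    using assms by (intro poly_hull_subset_con) (auto simp: constr_system_def con_def)
  then show ?thesis
    using assms(3) by (auto simp: con_def)
qed

lemma violates_if_poly_hull_violates:
  assumes "constr_system Cs" "c \<in> Cs" "\<And>y. y \<in> Qi \<Longrightarrow> satisfies y c"
    and "x \<in> poly_hull (Qi \<union> Qj)" "\<not> satisfies x c"
  shows "violates Qj c"
  using assms poly_hull_satisfies[of c "Qi \<union> Qj" x]
  unfolding violates_def constr_system_def by blast

lemma poly_hull_add_ray:
  assumes "ray_of T r" "p \<in> T" "T \<subseteq> S" "y \<in> poly_hull S" "0 \<le> l"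
  shows "y + l *\<^sub>R r \<in> poly_hull S"
proof (rule mem_poly_hullI)
  fix Cs assume Cs: "constr_system Cs" "S \<subseteq> con Cs"
  have "inner (constr_normal c) r \<le> 0" if "c \<in> Cs" for c
    using assms(1,2) by (rule ray_of_inner_nonpos)
      (use Cs assms(3) that in \<open>auto simp: con_def intro: satisfies_imp_inner_le\<close>)
  moreover have "y \<in> con Cs"
    using poly_hull_subset_con[OF Cs] assms(4) by blast
  ultimately show "y + l *\<^sub>R r \<in> con Cs"
    using assms(5) unfolding con_def by (blast intro: satisfies_add_nonpos_direction)
qed

lemma poly_hull_convex_comb_from_closure:
  assumes "g \<in> closure S" "q \<in> poly_hull S" "0 < t" "t \<le> 1"
  shows "(1 - t) *\<^sub>R g + t *\<^sub>R q \<in> poly_hull S"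
proof (rule mem_poly_hullI)
  fix Cs assume Cs: "constr_system Cs" "S \<subseteq> con Cs"
  have "q \<in> con Cs"
    using poly_hull_subset_con[OF Cs] assms(2) by blast
  moreover have "inner (constr_normal c) g \<le> constr_rhs c" if "c \<in> Cs" for c
    using Cs that by (intro inner_le_on_closure[OF _ assms(1)]) (auto simp: con_def satisfies_imp_inner_le)
  ultimately show "(1 - t) *\<^sub>R g + t *\<^sub>R q \<in> con Cs"
    using assms(3,4) unfolding con_def by (blast intro: satisfies_convex_comb_relaxed)
qed

lemma points_nonempty_if_gen_nonempty: "x \<in> gen R P C \<Longrightarrow> P \<noteq> {}"
  unfolding gen_def by auto

lemma points_subset_gen:
  assumes "finite P"
  shows "P \<subseteq> gen R P C"
proof
  fix p assume "p \<in> P"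
  let ?\<sigma> = "\<lambda>p'. if p' = p then 1 else 0 :: real"
  have "(\<Sum>p'\<in>P. ?\<sigma> p' *\<^sub>R p') = p"
    using assms \<open>p \<in> P\<close> by (simp add: if_distrib[of "\<lambda>x. x *\<^sub>R _"] cong: if_cong)
  then show "p \<in> gen R P C"
    unfolding gen_def using assms \<open>p \<in> P\<close>
    by (intro CollectI exI[of _ "\<lambda>_. 0"] exI[of _ ?\<sigma>] exI[of _ "\<lambda>_. 0"]) auto
qed

lemma convex_comb_closure_point_in_gen:
  assumes "finite P" "finite C" "p \<in> P" "c \<in> C" "0 < u" "u \<le> 1"
  shows "(1 - u) *\<^sub>R c + u *\<^sub>R p \<in> gen R P C"
proof -
  let ?\<sigma> = "\<lambda>p'. if p' = p then u else 0"
  let ?\<tau> = "\<lambda>c'. if c' = c then 1 - u else 0"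
  have "(\<Sum>p'\<in>P. ?\<sigma> p' *\<^sub>R p') = u *\<^sub>R p" "(\<Sum>c'\<in>C. ?\<tau> c' *\<^sub>R c') = (1 - u) *\<^sub>R c"
    using assms by (simp_all add: if_distrib[of "\<lambda>x. x *\<^sub>R _"] cong: if_cong)
  then show ?thesis
    unfolding gen_def using assms
    by (intro CollectI exI[of _ "\<lambda>_. 0"] exI[of _ ?\<sigma>] exI[of _ ?\<tau>]) auto
qed

lemma closure_points_subset_closure_gen:
  fixes P C :: "'a::real_normed_vector set"
  assumes "finite P" "finite C" "P \<noteq> {}"
  shows "C \<subseteq> closure (gen R P C)"
proof
  fix c assume "c \<in> C"
  obtain p where "p \<in> P"
    using assms(3) by blast
  show "c \<in> closure (gen R P C)"
    by (rule in_closure_if_open_segment_subset[where b = p])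
      (use assms \<open>c \<in> C\<close> \<open>p \<in> P\<close> in \<open>auto intro: convex_comb_closure_point_in_gen\<close>)
qed

lemma ray_of_gen:
  assumes "gen_system R P C" "r \<in> R"
  shows "ray_of (gen R P C) r"
  unfolding ray_of_def
proof (intro conjI ballI allI impI)
  show "r \<noteq> 0"
    using assms by (auto simp: gen_system_def)
  fix y and l :: real assume "y \<in> gen R P C" "0 \<le> l"
  then obtain \<rho> \<sigma> \<tau> where h: "\<forall>r\<in>R. \<rho> r \<ge> 0" "\<forall>p\<in>P. \<sigma> p \<ge> 0" "\<forall>c\<in>C. \<tau> c \<ge> 0"
      "\<exists>p\<in>P. \<sigma> p \<noteq> 0" "sum \<sigma> P + sum \<tau> C = 1"
      "y = (\<Sum>r\<in>R. \<rho> r *\<^sub>R r) + (\<Sum>p\<in>P. \<sigma> p *\<^sub>R p) + (\<Sum>c\<in>C. \<tau> c *\<^sub>R c)"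
    unfolding gen_def by blast
  let ?\<rho> = "\<lambda>r'. \<rho> r' + (if r' = r then l else 0)"
  have "(\<Sum>r'\<in>R. ?\<rho> r' *\<^sub>R r') = (\<Sum>r'\<in>R. \<rho> r' *\<^sub>R r') + l *\<^sub>R r"
    using assms by (simp add: gen_system_def scaleR_add_left sum.distrib
        if_distrib[of "\<lambda>x. x *\<^sub>R _"] cong: if_cong)
  then show "y + l *\<^sub>R r \<in> gen R P C"
    unfolding gen_def using h \<open>0 \<le> l\<close>
    by (intro CollectI exI[of _ ?\<rho>] exI[of _ \<sigma>] exI[of _ \<tau>]) (auto simp: algebra_simps)
qed

lemma add_sum_rays_mem:
  assumes "finite R" "\<And>r. r \<in> R \<Longrightarrow> ray_of K r" "\<And>r. r \<in> R \<Longrightarrow> 0 \<le> \<rho> r" "z \<in> K"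
  shows "z + (\<Sum>r\<in>R. \<rho> r *\<^sub>R r) \<in> K"
  using assms
proof (induction R rule: finite_induct)
  case empty
  then show ?case by simp
next
  case (insert r R)
  have "z + (\<Sum>r\<in>R. \<rho> r *\<^sub>R r) + \<rho> r *\<^sub>R r \<in> K"
    using insert by (auto simp: ray_of_def)
  then show ?case
    using insert(1,2) by (simp add: add_ac)
qed

lemma gen_subset:
  assumes "finite R" "finite P" "finite C" "convex K" "P \<subseteq> K" "C \<subseteq> K"
    and "\<And>r. r \<in> R \<Longrightarrow> ray_of K r"
  shows "gen R P C \<subseteq> K"
proof
  fix m assume "m \<in> gen R P C"
  then obtain \<rho> \<sigma> \<tau> where h: "\<forall>r\<in>R. \<rho> r \<ge> 0" "\<forall>p\<in>P. \<sigma> p \<ge> 0" "\<forall>c\<in>C. \<tau> c \<ge> 0"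
      "sum \<sigma> P + sum \<tau> C = 1"
      "m = (\<Sum>r\<in>R. \<rho> r *\<^sub>R r) + (\<Sum>p\<in>P. \<sigma> p *\<^sub>R p) + (\<Sum>c\<in>C. \<tau> c *\<^sub>R c)"
    unfolding gen_def by blast
  have "(\<Sum>j\<in>P <+> C. case_sum \<sigma> \<tau> j *\<^sub>R case_sum id id j) \<in> K"
    using assms h by (intro convex_sum) (auto simp: sum.Plus comp_def)
  then have "(\<Sum>p\<in>P. \<sigma> p *\<^sub>R p) + (\<Sum>c\<in>C. \<tau> c *\<^sub>R c) \<in> K"
    using assms by (simp add: sum.Plus comp_def)
  then have "(\<Sum>p\<in>P. \<sigma> p *\<^sub>R p) + (\<Sum>c\<in>C. \<tau> c *\<^sub>R c) + (\<Sum>r\<in>R. \<rho> r *\<^sub>R r) \<in> K"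
    using assms h by (intro add_sum_rays_mem[of R K]) auto
  then show "m \<in> K"
    using h(5) by (simp add: add_ac)
qed

lemma gen_generators_le:
  assumes "gen_system R P C" "gen R P C \<noteq> {}" "\<And>y. y \<in> gen R P C \<Longrightarrow> inner a y \<le> b"
  shows "\<And>r. r \<in> R \<Longrightarrow> inner a r \<le> 0"
    and "\<And>p. p \<in> P \<Longrightarrow> inner a p \<le> b"
    and "\<And>c. c \<in> C \<Longrightarrow> inner a c \<le> b"
proof -
  have fin: "finite R" "finite P" "finite C" "P \<noteq> {}"
    using assms(1,2) points_nonempty_if_gen_nonempty by (auto simp: gen_system_def)
  show "inner a r \<le> 0" if "r \<in> R" for r
    using ray_of_gen[OF assms(1) that] assms(2,3) by (metis all_not_in_conv ray_of_inner_nonpos)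
  show "inner a p \<le> b" if "p \<in> P" for p
    using points_subset_gen[OF fin(2)] assms(3) that by blast
  show "inner a c \<le> b" if "c \<in> C" for c
    using closure_points_subset_closure_gen[OF fin(2-4)] inner_le_on_closure assms(3) that by blast
qed

lemma sum_nonpos_eq_0_iff:
  fixes f :: "'a \<Rightarrow> 'b::ordered_ab_group_add"
  shows "finite A \<Longrightarrow> (\<And>x. x \<in> A \<Longrightarrow> f x \<le> 0) \<Longrightarrow> sum f A = 0 \<longleftrightarrow> (\<forall>x\<in>A. f x = 0)"
  using sum_nonneg_eq_0_iff[of A "\<lambda>x. - f x"] by (simp add: sum_negf)

lemma gen_face:
  fixes a :: "'a::real_inner"
  assumes gs: "gen_system R P C" and m: "m \<in> gen R P C" "inner a m = b"
    and R: "\<And>r. r \<in> R \<Longrightarrow> inner a r \<le> 0"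
    and P: "\<And>p. p \<in> P \<Longrightarrow> inner a p \<le> b"
    and C: "\<And>c. c \<in> C \<Longrightarrow> inner a c \<le> b"
  shows "m \<in> gen {r\<in>R. inner a r = 0} {p\<in>P. inner a p = b} {c\<in>C. inner a c = b}"
proof -
  have fin: "finite R" "finite P" "finite C"
    using gs by (auto simp: gen_system_def)
  obtain \<rho> \<sigma> \<tau> where h: "\<forall>r\<in>R. \<rho> r \<ge> 0" "\<forall>p\<in>P. \<sigma> p \<ge> 0" "\<forall>c\<in>C. \<tau> c \<ge> 0"
      "\<exists>p\<in>P. \<sigma> p \<noteq> 0" "sum \<sigma> P + sum \<tau> C = 1"
      "m = (\<Sum>r\<in>R. \<rho> r *\<^sub>R r) + (\<Sum>p\<in>P. \<sigma> p *\<^sub>R p) + (\<Sum>c\<in>C. \<tau> c *\<^sub>R c)"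
    using m(1) unfolding gen_def by blast
  let ?SR = "\<Sum>r\<in>R. \<rho> r * inner a r"
  let ?SP = "\<Sum>p\<in>P. \<sigma> p * (inner a p - b)"
  let ?SC = "\<Sum>c\<in>C. \<tau> c * (inner a c - b)"
  have "?SP = (\<Sum>p\<in>P. \<sigma> p * inner a p) - sum \<sigma> P * b"
    by (simp add: sum_subtractf right_diff_distrib sum_distrib_right)
  moreover have "?SC = (\<Sum>c\<in>C. \<tau> c * inner a c) - sum \<tau> C * b"
    by (simp add: sum_subtractf right_diff_distrib sum_distrib_right)
  moreover have "inner a m = ?SR + (\<Sum>p\<in>P. \<sigma> p * inner a p) + (\<Sum>c\<in>C. \<tau> c * inner a c)"
    using h(6) by (simp add: inner_add_right inner_sum_right)
  moreover have "sum \<sigma> P * b + sum \<tau> C * b = b"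
    using h(5) by (metis distrib_right mult_1)
  ultimately have "?SR + ?SP + ?SC = 0"
    using m(2) by linarith
  moreover have "?SR \<le> 0" "?SP \<le> 0" "?SC \<le> 0"
    using h R P C by (auto intro!: sum_nonpos simp: mult_nonneg_nonpos)
  ultimately have "?SR = 0" "?SP = 0" "?SC = 0"
    by linarith+
  then have zero: "\<forall>r\<in>R. \<rho> r * inner a r = 0" "\<forall>p\<in>P. \<sigma> p * (inner a p - b) = 0"
      "\<forall>c\<in>C. \<tau> c * (inner a c - b) = 0"
    using h R P C fin sum_nonpos_eq_0_iff[of R "\<lambda>r. \<rho> r * inner a r"]
      sum_nonpos_eq_0_iff[of P "\<lambda>p. \<sigma> p * (inner a p - b)"]
      sum_nonpos_eq_0_iff[of C "\<lambda>c. \<tau> c * (inner a c - b)"]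
    by (simp_all add: mult_nonneg_nonpos)
  have "(\<Sum>r\<in>{r\<in>R. inner a r = 0}. \<rho> r *\<^sub>R r) = (\<Sum>r\<in>R. \<rho> r *\<^sub>R r)"
    "(\<Sum>p\<in>{p\<in>P. inner a p = b}. \<sigma> p *\<^sub>R p) = (\<Sum>p\<in>P. \<sigma> p *\<^sub>R p)"
    "(\<Sum>c\<in>{c\<in>C. inner a c = b}. \<tau> c *\<^sub>R c) = (\<Sum>c\<in>C. \<tau> c *\<^sub>R c)"
    "sum \<sigma> {p\<in>P. inner a p = b} = sum \<sigma> P" "sum \<tau> {c\<in>C. inner a c = b} = sum \<tau> C"
    by (rule sum.mono_neutral_left; use fin zero in auto)+
  then show ?thesis
    unfolding gen_def using h zero
    by (intro CollectI exI[of _ \<rho>] exI[of _ \<sigma>] exI[of _ \<tau>]) auto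
qed

lemma exists_saturating_generator:
  fixes a :: "'a::real_inner"
  assumes gs: "gen_system R P C" and bound: "\<And>y. y \<in> gen R P C \<Longrightarrow> inner a y \<le> b"
    and m: "m \<in> closure (gen R P C)" "inner a m = b"
  shows "\<exists>g\<in>P \<union> C. inner a g = b"
proof (rule ccontr)
  assume none: "\<not> ?thesis"
  have ne: "gen R P C \<noteq> {}"
    using m(1) by auto
  have fin: "finite R" "finite P" "finite C" and "P \<noteq> {}"
    using gs ne points_nonempty_if_gen_nonempty by (auto simp: gen_system_def)
  have bounds: "\<And>r. r \<in> R \<Longrightarrow> inner a r \<le> 0" "\<And>g. g \<in> P \<union> C \<Longrightarrow> inner a g \<le> b"
    using gen_generators_le[OF gs ne] bound by blast+
  define M where "M = Max (inner a ` (P \<union> C))"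
  have "M \<in> inner a ` (P \<union> C)"
    unfolding M_def using fin \<open>P \<noteq> {}\<close> by (intro Max_in) auto
  then have "M < b"
    using none bounds by fastforce
  have "gen R P C \<subseteq> {y. inner a y \<le> M}"
  proof (rule gen_subset[OF fin convex_halfspace_le])
    show "P \<subseteq> {y. inner a y \<le> M}" "C \<subseteq> {y. inner a y \<le> M}"
      unfolding M_def using fin by auto
    show "ray_of {y. inner a y \<le> M} r" if "r \<in> R" for r
      using gs bounds(1)[OF that] that
      by (auto simp: ray_of_def gen_system_def inner_add_right
          intro: order_trans[OF add_left_mono[OF mult_nonneg_nonpos]])
  qed
  then have "inner a m \<le> M"
    using inner_le_on_closure m(1) by blast
  then show False
    using m(2) \<open>M < b\<close> by simp
qed
lemma thm4_condI_ray:
  assumes "r \<in> R" "\<beta> \<in> Cs" "inner (constr_normal \<beta>) r = 0" "violates Qj \<beta>" "\<not> ray_of Qj r"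
  shows "thm4_cond R P C Cs Qj H"
  unfolding thm4_cond_def using assms by (intro exI[of _ Ray] exI[of _ r] exI[of _ \<beta>]) auto

lemma thm4_condI_closure_point:
  assumes "c \<in> C" "\<beta> \<in> Cs" "inner (constr_normal \<beta>) c = constr_rhs \<beta>" "violates Qj \<beta>"
    "c \<notin> closure Qj"
  shows "thm4_cond R P C Cs Qj H"
  unfolding thm4_cond_def using assms by (intro exI[of _ ClosurePt] exI[of _ c] exI[of _ \<beta>]) auto

lemma thm4_condI_point:
  assumes "p \<in> P" "\<beta> \<in> Cs" "inner (constr_normal \<beta>) p = constr_rhs \<beta>" "violates Qj \<beta>"
    "\<not> is_strict \<beta>" "p \<notin> closure Qj"
  shows "thm4_cond R P C Cs Qj H"
  unfolding thm4_cond_def using assms by (intro exI[of _ Pt] exI[of _ p] exI[of _ \<beta>]) auto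

lemma thm4_condI_strict:
  assumes "g \<in> P \<union> C" "\<beta> \<in> Cs" "inner (constr_normal \<beta>) g = constr_rhs \<beta>" "violates Qj \<beta>"
    "is_strict \<beta>" "x \<in> H" "x \<notin> Qj" "inner (constr_normal \<beta>) x = constr_rhs \<beta>"
  shows "thm4_cond R P C Cs Qj H"
proof -
  obtain k where "in_gen R P C k g" "saturates k g \<beta>"
    using assms(1,3) by (metis Un_iff in_gen.simps(2,3) saturates.simps(2,3))
  then show ?thesis
    unfolding thm4_cond_def using assms by (intro exI[of _ k] exI[of _ g] exI[of _ \<beta>]) auto
qed

lemma thm4_condE:
  assumes "thm4_cond R P C Cs Qj H"
  obtains (ray) \<beta> r where "\<beta> \<in> Cs" "violates Qj \<beta>" "r \<in> R"
      "inner (constr_normal \<beta>) r = 0" "\<not> ray_of Qj r"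
    | (point) \<beta> g where "\<beta> \<in> Cs" "violates Qj \<beta>" "g \<in> P \<union> C"
      "inner (constr_normal \<beta>) g = constr_rhs \<beta>" "g \<notin> closure Qj"
    | (strict) \<beta> x where "\<beta> \<in> Cs" "violates Qj \<beta>" "is_strict \<beta>" "x \<in> H" "x \<notin> Qj"
      "inner (constr_normal \<beta>) x = constr_rhs \<beta>"
proof -
  obtain k g \<beta> where "in_gen R P C k g" "\<beta> \<in> Cs" "saturates k g \<beta>" "violates Qj \<beta>"
    and "(k \<in> {Ray, ClosurePt} \<and> \<not> subsumes Qj k g)
         \<or> (k = Pt \<and> \<not> is_strict \<beta> \<and> g \<notin> closure Qj)
         \<or> (is_strict \<beta> \<and> (\<exists>x\<in>H - Qj. saturates Pt x \<beta>))"
    using assms unfolding thm4_cond_def by blast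
  then show ?thesis
    using that by (cases k) auto
qed

lemma crossing_parameter:
  fixes F0 F1 t :: real
  assumes "F1 < F0"
  shows "(1 - t) * F0 + t * F1 = (F0 - F1) * (F0 / (F0 - F1) - t)"
  using assms by (simp add: field_simps)

text \<open>The point is where the segment enters the closure of the polyhedron: the largest of
  the crossing parameters of the constraints violated at the start.\<close>
lemma exists_entry_point:
  fixes x q :: "'a::real_inner"
  assumes "finite Cs" "x \<notin> con Cs" "q \<in> con Cs"
  obtains m \<beta> where "m \<in> closed_segment x q" "\<beta> \<in> Cs" "\<not> satisfies x \<beta>"
    "inner (constr_normal \<beta>) m = constr_rhs \<beta>"
    "\<And>\<beta>'. \<beta>' \<in> Cs \<Longrightarrow> inner (constr_normal \<beta>') m \<le> constr_rhs \<beta>'"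
proof -
  define V where "V = {\<beta>\<in>Cs. \<not> satisfies x \<beta>}"
  define F0 where "F0 \<beta> = inner (constr_normal \<beta>) x - constr_rhs \<beta>" for \<beta>
  define F1 where "F1 \<beta> = inner (constr_normal \<beta>) q - constr_rhs \<beta>" for \<beta>
  define e where "e \<beta> = F0 \<beta> / (F0 \<beta> - F1 \<beta>)" for \<beta>
  have V: "finite V" "V \<noteq> {}"
    using assms by (auto simp: V_def con_def)
  have F: "0 \<le> F0 \<beta>" "F1 \<beta> \<le> 0" "F1 \<beta> < F0 \<beta>" if "\<beta> \<in> V" for \<beta>
    using that assms(3) by (auto simp: V_def con_def F0_def F1_def satisfies_iff split: if_splits)
  have along: "inner (constr_normal \<beta>) ((1 - t) *\<^sub>R x + t *\<^sub>R q) - constr_rhs \<beta>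
      = (F0 \<beta> - F1 \<beta>) * (e \<beta> - t)" if "\<beta> \<in> V" for \<beta> t
    using crossing_parameter[OF F(3)[OF that], of t]
    by (simp add: e_def F0_def F1_def inner_convex_comb algebra_simps)
  have "Max (e ` V) \<in> e ` V"
    using V by (intro Max_in) auto
  then obtain \<beta> where \<beta>: "\<beta> \<in> V" "e \<beta> = Max (e ` V)"
    by auto
  define t where "t = e \<beta>"
  define m where "m = (1 - t) *\<^sub>R x + t *\<^sub>R q"
  have "0 \<le> t" "t \<le> 1"
    using F[OF \<beta>(1)] by (auto simp: t_def e_def divide_le_eq_1)
  then have "m \<in> closed_segment x q"
    by (auto simp: m_def in_segment)
  moreover have "inner (constr_normal \<beta>') m \<le> constr_rhs \<beta>'" if "\<beta>' \<in> Cs" for \<beta>'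
  proof (cases "\<beta>' \<in> V")
    case True
    have "e \<beta>' \<le> t"
      using True V \<beta> by (simp add: t_def)
    then have "(F0 \<beta>' - F1 \<beta>') * (e \<beta>' - t) \<le> 0"
      using F(3)[OF True] by (intro mult_nonneg_nonpos) auto
    then show ?thesis
      using along[OF True, of t] by (simp add: m_def)
  next
    case False
    then have "satisfies x \<beta>'" "satisfies q \<beta>'"
      using that assms(3) by (auto simp: V_def con_def)
    then have "satisfies m \<beta>'"
      using convexD_alt[OF convex_satisfies, of x \<beta>' q t] \<open>0 \<le> t\<close> \<open>t \<le> 1\<close>
      by (simp add: m_def)
    then show ?thesis
      by (rule satisfies_imp_inner_le)
  qed
  moreover have "inner (constr_normal \<beta>) m = constr_rhs \<beta>"
    using along[OF \<beta>(1), of t] by (simp add: m_def t_def)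
  ultimately show ?thesis
    using that \<beta>(1) by (auto simp: V_def)
qed

lemma thm4_cond_if_in_closure:
  assumes csi: "constr_system Csi" and gsi: "gen_system Ra Pa Ca"
    and Qi: "Qi = con Csi" "Qi = gen Ra Pa Ca"
    and x: "x \<in> poly_hull (Qi \<union> Qj)" "x \<in> closure Qi" "x \<notin> Qi" "x \<notin> Qj"
  shows "thm4_cond Ra Pa Ca Csi Qj (poly_hull (Qi \<union> Qj))"
proof -
  obtain \<beta> where \<beta>: "\<beta> \<in> Csi" "\<not> satisfies x \<beta>"
    using x(3) Qi(1) by (auto simp: con_def)
  have sat: "\<And>y. y \<in> Qi \<Longrightarrow> satisfies y \<beta>"
    using \<beta>(1) Qi(1) by (auto simp: con_def)
  have le: "\<And>y. y \<in> Qi \<Longrightarrow> inner (constr_normal \<beta>) y \<le> constr_rhs \<beta>"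
    using sat satisfies_imp_inner_le by blast
  have "inner (constr_normal \<beta>) x \<le> constr_rhs \<beta>"
    using inner_le_on_closure[OF le x(2)] .
  then have strict: "is_strict \<beta>" and eq: "inner (constr_normal \<beta>) x = constr_rhs \<beta>"
    using \<beta>(2) by (auto simp: satisfies_iff split: if_splits)
  obtain g where "g \<in> Pa \<union> Ca" "inner (constr_normal \<beta>) g = constr_rhs \<beta>"
    using exists_saturating_generator[OF gsi _ _ eq] le x(2) Qi(2) by blast
  moreover have "violates Qj \<beta>"
    using violates_if_poly_hull_violates[OF csi \<beta>(1) sat x(1) \<beta>(2)] .
  ultimately show ?thesis
    using thm4_condI_strict[OF _ \<beta>(1) _ _ strict x(1) x(4) eq] by blast
qed

lemma thm4_cond_if_saturated_point_outside_closure: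
  assumes gsj: "gen_system Rb Pb Cb" and Qj: "Qj = con Csj" "Qj = gen Rb Pb Cb"
    and "convex Qi" and \<beta>: "\<beta> \<in> Csj" "violates Qi \<beta>"
    and m: "m \<in> Qj" "inner (constr_normal \<beta>) m = constr_rhs \<beta>" "m \<notin> closure Qi"
  shows "thm4_cond Rb Pb Cb Csj Qi H"
proof (rule ccontr)
  assume no: "\<not> thm4_cond Rb Pb Cb Csj Qi H"
  let ?a = "constr_normal \<beta>" and ?b = "constr_rhs \<beta>"
  have fin: "finite Rb" "finite Pb" "finite Cb"
    using gsj by (auto simp: gen_system_def)
  have non_strict: "\<not> is_strict \<beta>"
    using m(1,2) Qj(1) \<beta>(1) by (auto simp: con_def satisfies_iff)
  have "\<And>y. y \<in> Qj \<Longrightarrow> inner ?a y \<le> ?b"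
    using Qj(1) \<beta>(1) by (auto simp: con_def intro: satisfies_imp_inner_le)
  then have bounds: "\<And>r. r \<in> Rb \<Longrightarrow> inner ?a r \<le> 0" "\<And>g. g \<in> Pb \<union> Cb \<Longrightarrow> inner ?a g \<le> ?b"
    using gen_generators_le[OF gsj] m(1) Qj(2) by blast+
  have "m \<in> gen {r\<in>Rb. inner ?a r = 0} {p\<in>Pb. inner ?a p = ?b} {c\<in>Cb. inner ?a c = ?b}"
    using gen_face[OF gsj _ m(2)] bounds m(1) Qj(2) by blast
  also have "\<dots> \<subseteq> closure Qi"
  proof (rule gen_subset)
    show "{p\<in>Pb. inner ?a p = ?b} \<subseteq> closure Qi"
      using no thm4_condI_point[OF _ \<beta>(1) _ \<beta>(2) non_strict] by blast
    show "{c\<in>Cb. inner ?a c = ?b} \<subseteq> closure Qi"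
      using no thm4_condI_closure_point[OF _ \<beta>(1) _ \<beta>(2)] by blast
    show "ray_of (closure Qi) r" if "r \<in> {r\<in>Rb. inner ?a r = 0}" for r
      using no thm4_condI_ray[OF _ \<beta>(1) _ \<beta>(2)] that by (blast intro: ray_of_closure)
  qed (use fin \<open>convex Qi\<close> in \<open>auto intro: convex_closure\<close>)
  finally show False
    using m(3) by blast
qed

lemma thm4_cond_if_outside_closure:
  assumes csi: "constr_system Csi" and csj: "constr_system Csj" and gsj: "gen_system Rb Pb Cb"
    and Qi: "Qi = con Csi" "Qi \<noteq> {}" and Qj: "Qj = con Csj" "Qj = gen Rb Pb Cb"
    and x: "x \<in> poly_hull (Qi \<union> Qj)" "x \<notin> Qj" "x \<notin> closure Qi"
  shows "thm4_cond Rb Pb Cb Csj Qi (poly_hull (Qi \<union> Qj))"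
proof -
  let ?H = "poly_hull (Qi \<union> Qj)"
  obtain p0 where "p0 \<in> Qi"
    using Qi(2) by blast
  then obtain \<beta>1 where \<beta>1: "\<beta>1 \<in> Csi" "inner (constr_normal \<beta>1) x > constr_rhs \<beta>1"
    using in_closure_con_if_relaxed[of p0 Csi x] x(3) Qi(1) by force
  let ?a1 = "constr_normal \<beta>1" and ?c1 = "constr_rhs \<beta>1"
  have Qi_le: "\<And>y. y \<in> Qi \<Longrightarrow> inner ?a1 y \<le> ?c1"
    using Qi(1) \<beta>1(1) by (auto simp: con_def intro: satisfies_imp_inner_le)
  have "\<not> satisfies x (NonStrict ?a1 ?c1)"
    using \<beta>1(2) by simp
  moreover have "?a1 \<noteq> 0"
    using csi \<beta>1(1) by (auto simp: constr_system_def)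
  ultimately obtain q where q: "q \<in> Qj" "inner ?a1 q > ?c1"
    using poly_hull_satisfies[of "NonStrict ?a1 ?c1" "Qi \<union> Qj" x] x(1) Qi_le by force
  obtain m \<beta> where m: "m \<in> closed_segment x q" and \<beta>: "\<beta> \<in> Csj" "\<not> satisfies x \<beta>"
    and m_eq: "inner (constr_normal \<beta>) m = constr_rhs \<beta>"
    and m_le: "\<And>\<beta>'. \<beta>' \<in> Csj \<Longrightarrow> inner (constr_normal \<beta>') m \<le> constr_rhs \<beta>'"
    using exists_entry_point[of Csj x q] csj x(2) q(1) Qj(1) by (auto simp: constr_system_def)
  have "m \<in> ?H"
    using closed_segment_subset[OF x(1) _ convex_poly_hull] subset_poly_hull q(1) m by blast
  moreover have "inner ?a1 m > ?c1"
    using closed_segment_subset[OF _ _ convex_halfspace_gt, of x ?c1 ?a1 q] \<beta>1(2) q(2) m by blast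
  then have "m \<notin> closure Qi"
    using inner_le_on_closure[OF Qi_le] by force
  moreover have "m \<in> closure Qj"
    using in_closure_con_if_relaxed[OF _ m_le] q(1) Qj(1) by blast
  moreover have "violates Qi \<beta>"
    using violates_if_poly_hull_violates[OF csj \<beta>(1) _ _ \<beta>(2), of Qj Qi] x(1) Qj(1) \<beta>(1)
    by (auto simp: con_def Un_commute)
  ultimately show ?thesis
  proof (cases "m \<in> Qj")
    case True
    then show ?thesis
      using thm4_cond_if_saturated_point_outside_closure[OF gsj Qj convex_con \<beta>(1)]
        \<open>violates Qi \<beta>\<close> m_eq \<open>m \<notin> closure Qi\<close> Qi(1) by blast
  next
    case False
    have "m \<notin> Qi"
      using \<open>m \<notin> closure Qi\<close> closure_subset by blast
    then have "thm4_cond Rb Pb Cb Csj Qi (poly_hull (Qj \<union> Qi))"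
      using thm4_cond_if_in_closure[OF csj gsj Qj, of m Qi] \<open>m \<in> ?H\<close> \<open>m \<in> closure Qj\<close> False
      by (simp add: Un_commute)
    then show ?thesis
      by (simp add: Un_commute)
  qed
qed

lemma not_in_poly_hull_union_by_ray:
  assumes Qj: "Qj = con Csj" and r: "ray_of Qi r" "\<not> ray_of Qj r"
    and "p \<in> Qi" and sat: "\<And>y. y \<in> Qi \<Longrightarrow> satisfies y \<beta>"
    and q: "q \<in> Qj" "\<not> satisfies q \<beta>" and "inner (constr_normal \<beta>) r = 0"
  shows "\<exists>y\<in>poly_hull (Qi \<union> Qj). y \<notin> Qi \<union> Qj"
proof -
  have "r \<noteq> 0"
    using r(1) by (simp add: ray_of_def)
  then obtain \<beta>' where \<beta>': "\<beta>' \<in> Csj" "inner (constr_normal \<beta>') r > 0"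
    using ray_of_conI[of r Csj] r(2) Qj by force
  let ?a = "constr_normal \<beta>'" and ?b = "constr_rhs \<beta>'"
  define l where "l = (\<bar>?b - inner ?a q\<bar> + 1) / inner ?a r"
  define y where "y = q + l *\<^sub>R r"
  have "0 \<le> l"
    using \<beta>'(2) by (simp add: l_def)
  moreover have "q \<in> poly_hull (Qi \<union> Qj)"
    using q(1) subset_poly_hull by blast
  ultimately have "y \<in> poly_hull (Qi \<union> Qj)"
    unfolding y_def by (intro poly_hull_add_ray[OF r(1) \<open>p \<in> Qi\<close> Un_upper1])
  moreover have "inner ?a y = inner ?a q + \<bar>?b - inner ?a q\<bar> + 1"
    using \<beta>'(2) by (simp add: y_def l_def inner_add_right)
  then have "\<not> satisfies y \<beta>'"
    using satisfies_imp_inner_le[of y \<beta>'] by linarith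
  then have "y \<notin> Qj"
    using Qj \<beta>'(1) by (auto simp: con_def)
  moreover have "inner (constr_normal \<beta>) y = inner (constr_normal \<beta>) q"
    using \<open>inner (constr_normal \<beta>) r = 0\<close> by (simp add: y_def inner_add_right)
  then have "y \<notin> Qi"
    using sat q(2) satisfies_mono[of \<beta> q y] by force
  ultimately show ?thesis
    by blast
qed

lemma not_in_poly_hull_union_by_closure_point:
  assumes g: "g \<in> closure Qi" "g \<notin> closure Qj" "inner (constr_normal \<beta>) g = constr_rhs \<beta>"
    and sat: "\<And>y. y \<in> Qi \<Longrightarrow> satisfies y \<beta>"
    and q: "q \<in> Qj" "\<not> satisfies q \<beta>"
  shows "\<exists>y\<in>poly_hull (Qi \<union> Qj). y \<notin> Qi \<union> Qj"
proof -
  let ?a = "constr_normal \<beta>" and ?b = "constr_rhs \<beta>"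
  have "\<exists>u. 0 < u \<and> u < 1 \<and> (1 - u) *\<^sub>R g + u *\<^sub>R q \<notin> Qj"
  proof (rule ccontr)
    assume "\<not> ?thesis"
    then have "g \<in> closure Qj"
      by (intro in_closure_if_open_segment_subset[of g q]) auto
    with g(2) show False
      by contradiction
  qed
  then obtain u where u: "0 < u" "u < 1" "(1 - u) *\<^sub>R g + u *\<^sub>R q \<notin> Qj"
    by blast
  define y where "y = (1 - u) *\<^sub>R g + u *\<^sub>R q"
  have "g \<in> closure (Qi \<union> Qj)"
    using g(1) closure_mono[of Qi "Qi \<union> Qj"] by blast
  moreover have "q \<in> poly_hull (Qi \<union> Qj)"
    using q(1) subset_poly_hull by blast
  ultimately have "y \<in> poly_hull (Qi \<union> Qj)"
    unfolding y_def using u by (intro poly_hull_convex_comb_from_closure) auto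
  moreover have y_val: "inner ?a y - ?b = u * (inner ?a q - ?b)"
    using g(3) by (simp add: y_def inner_convex_comb algebra_simps)
  have "\<not> satisfies y \<beta>"
  proof (cases "is_strict \<beta>")
    case True
    then have "0 \<le> u * (inner ?a q - ?b)"
      using q(2) u(1) by (simp add: satisfies_iff)
    then show ?thesis
      using y_val True by (simp add: satisfies_iff)
  next
    case False
    then have "0 < u * (inner ?a q - ?b)"
      using q(2) u(1) by (simp add: satisfies_iff)
    then show ?thesis
      using y_val False by (simp add: satisfies_iff)
  qed
  then have "y \<notin> Qi"
    using sat by blast
  ultimately show ?thesis
    using u(3) y_def by blast
qed

lemma poly_hull_ne_union_if_thm4_cond:
  assumes gsi: "gen_system Ra Pa Ca" and Qi: "Qi = con Csi" "Qi = gen Ra Pa Ca" "Qi \<noteq> {}"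
    and Qj: "Qj = con Csj" and cond: "thm4_cond Ra Pa Ca Csi Qj (poly_hull (Qi \<union> Qj))"
  shows "poly_hull (Qi \<union> Qj) \<noteq> Qi \<union> Qj"
  using cond
proof (cases rule: thm4_condE)
  case (ray \<beta> r)
  have sat: "\<And>y. y \<in> Qi \<Longrightarrow> satisfies y \<beta>"
    using Qi(1) ray(1) by (auto simp: con_def)
  obtain p q where "p \<in> Qi" "q \<in> Qj" "\<not> satisfies q \<beta>"
    using Qi(3) ray(2) by (auto simp: violates_def)
  moreover have "ray_of Qi r"
    using ray_of_gen[OF gsi ray(3)] Qi(2) by simp
  ultimately show ?thesis
    using not_in_poly_hull_union_by_ray[OF Qj _ ray(5) _ sat _ _ ray(4)] by blast
next
  case (point \<beta> g)
  have sat: "\<And>y. y \<in> Qi \<Longrightarrow> satisfies y \<beta>"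
    using Qi(1) point(1) by (auto simp: con_def)
  have fin: "finite Pa" "finite Ca" "Pa \<noteq> {}"
    using gsi Qi(2,3) points_nonempty_if_gen_nonempty by (auto simp: gen_system_def)
  have "g \<in> closure Qi"
    using point(3) points_subset_gen[OF fin(1)] closure_points_subset_closure_gen[OF fin] Qi(2)
      closure_subset by blast
  moreover obtain q where "q \<in> Qj" "\<not> satisfies q \<beta>"
    using point(2) by (auto simp: violates_def)
  ultimately show ?thesis
    using not_in_poly_hull_union_by_closure_point[OF _ point(5,4) sat] by blast
next
  case (strict \<beta> x)
  then have "\<not> satisfies x \<beta>"
    by (simp add: satisfies_iff)
  then have "x \<notin> Qi"
    using Qi(1) strict(1) by (auto simp: con_def)
  then show ?thesis
    using strict by blast
qed

theorem theorem4:
  fixes Cs1 Cs2 :: "(real^'n) constr set"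
    and R1 P1 C1 R2 P2 C2 :: "(real^'n) set"
    and Q1 Q2 :: "(real^'n) set"
  assumes "constr_system Cs1" and "constr_system Cs2"
    and "gen_system R1 P1 C1" and "gen_system R2 P2 C2"
    and "Q1 = con Cs1" and "Q1 = gen R1 P1 C1"
    and "Q2 = con Cs2" and "Q2 = gen R2 P2 C2"
    and "Q1 \<noteq> {}" and "Q2 \<noteq> {}"
  shows "poly_hull (Q1 \<union> Q2) \<noteq> Q1 \<union> Q2 \<longleftrightarrow>
         (thm4_cond R1 P1 C1 Cs1 Q2 (poly_hull (Q1 \<union> Q2))
          \<or> thm4_cond R2 P2 C2 Cs2 Q1 (poly_hull (Q1 \<union> Q2)))"
proof
  assume "poly_hull (Q1 \<union> Q2) \<noteq> Q1 \<union> Q2"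
  then obtain x where x: "x \<in> poly_hull (Q1 \<union> Q2)" "x \<notin> Q1" "x \<notin> Q2"
    using subset_poly_hull by blast
  show "thm4_cond R1 P1 C1 Cs1 Q2 (poly_hull (Q1 \<union> Q2))
      \<or> thm4_cond R2 P2 C2 Cs2 Q1 (poly_hull (Q1 \<union> Q2))"
    using thm4_cond_if_in_closure[OF assms(1,3,5,6) x(1) _ x(2,3)]
      thm4_cond_if_outside_closure[OF assms(1,2,4,5,9,7,8) x(1,3)] by blast
next
  assume "thm4_cond R1 P1 C1 Cs1 Q2 (poly_hull (Q1 \<union> Q2))
      \<or> thm4_cond R2 P2 C2 Cs2 Q1 (poly_hull (Q1 \<union> Q2))"
  then show "poly_hull (Q1 \<union> Q2) \<noteq> Q1 \<union> Q2"
  proof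
    assume "thm4_cond R1 P1 C1 Cs1 Q2 (poly_hull (Q1 \<union> Q2))"
    then show ?thesis
      by (rule poly_hull_ne_union_if_thm4_cond[OF assms(3,5,6,9,7)])
  next
    assume "thm4_cond R2 P2 C2 Cs2 Q1 (poly_hull (Q1 \<union> Q2))"
    then show ?thesis
      using poly_hull_ne_union_if_thm4_cond[OF assms(4,7,8,10,5)] by (simp add: Un_commute)
  qed
qed

end
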